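(* Let $X_1,\dots,X_n$ be completely regular continua, let $f_i:X_i\to X_i$ be continuous for $1\le i\le n$, and let $f:X_1\times\dots\times X_n\to X_1\times\dots\times X_n$ be defined by $f(x_1,\dots,x_n)=(f_1(x_1),\dots,f_n(x_n))$. Then every totally periodic $\omega$-limit set of $f$ is finite.
   Context: A continuum is a compact connected metric space; it is completely regular if every subcontinuum with more than one point has non-empty interior. For a continuous map $g$ of a compact metric space $Y$ and $y\in Y$, $\omega_g(y)=\{z:\ \exists\, n_i\to+\infty,\ g^{n_i}(y)\to z\}$; it is totally periodic if each of its points $z$ satisfies $g^m(z)=z$ for some $m\ge1$. *)

theory Defs
  imports "HOL-Analysis.Analysis"
begin

definition continuum :: "'a::metric_space set \<Rightarrow> bool" where
  "continuum X \<longleftrightarrow> X \<noteq> {} \<and> compact X \<and> connected X"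

definition completely_regular_continuum :: "'a::metric_space set \<Rightarrow> bool" where
  "completely_regular_continuum X \<longleftrightarrow> continuum X \<and>
     (\<forall>C. C \<subseteq> X \<and> continuum C \<and> (\<exists>a b. a \<in> C \<and> b \<in> C \<and> a \<noteq> b)
          \<longrightarrow> (top_of_set X) interior_of C \<noteq> {})"

definition omega_limit :: "'a topology \<Rightarrow> ('a \<Rightarrow> 'a) \<Rightarrow> 'a \<Rightarrow> 'a set" where
  "omega_limit T g y = {z. \<exists>r::nat \<Rightarrow> nat. filterlim r at_top sequentially \<and>
                              limitin T (\<lambda>k. (g ^^ r k) y) z sequentially}"

definition totally_periodic :: "('a \<Rightarrow> 'a) \<Rightarrow> 'a set \<Rightarrow> bool" where
  "totally_periodic g S \<longleftrightarrow> (\<forall>z\<in>S. \<exists>m\<ge>1. (g ^^ m) z = z)"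

definition prod_map :: "nat \<Rightarrow> (nat \<Rightarrow> 'a \<Rightarrow> 'a) \<Rightarrow> (nat \<Rightarrow> 'a) \<Rightarrow> (nat \<Rightarrow> 'a)" where
  "prod_map n f x = (\<lambda>i\<in>{..<n}. f i (x i))"

end

theory Submission
  imports Defs
begin

text \<open>Let \<open>F\<close> be the product map on the compact metrizable product \<open>P\<close> and \<open>\<Omega>\<close> the omega-limit
  set of \<open>y\<close>. Then \<open>\<Omega>\<close> is closed and forward invariant, and it cannot be split into two disjoint
  nonempty closed forward-invariant sets.

  Complete regularity makes \<open>\<Omega>\<close> totally disconnected. If a connected subset of \<open>\<Omega>\<close> had a
  nondegenerate projection \<open>D\<close> to some factor, \<open>D\<close> would be a subcontinuum with nonempty
  interior; the orbit of \<open>y\<close> would enter that interior at the projection of a periodic point, so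
  the coordinate orbit of \<open>y\<close> would be eventually periodic, hence finite, and \<open>D\<close>, lying in its
  closure, would be finite.

  A compact, totally disconnected, totally periodic \<open>\<Omega>\<close> is finite. By Baire, some iterate \<open>F\<^sup>m\<close>
  is the identity on a nonempty open \<open>W \<subseteq> \<Omega>\<close>. For \<open>a \<in> W\<close> and a clopen \<open>U\<close> with
  \<open>a \<in> U \<subseteq> W\<close>, the set of points entering \<open>U\<close> within \<open>m\<close> steps is clopen and forward invariant
  (as \<open>F\<^sup>m\<close> fixes \<open>U\<close>) with forward-invariant complement (by periodicity), so it is all of \<open>\<Omega>\<close>.
  Since \<open>{a}\<close> is a component, \<open>U\<close> can be chosen to avoid the first \<open>m\<close> iterates of any
  \<open>b \<in> \<Omega>\<close> outside the orbit of \<open>a\<close>, a contradiction; so \<open>\<Omega>\<close> lies in the finite orbit of \<open>a\<close>.\<close>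

section \<open>Iterates and periodic points\<close>

lemma continuous_map_funpow: "continuous_map X X g \<Longrightarrow> continuous_map X X (g ^^ k)"
  by (induction k) (auto intro: continuous_map_compose)

lemma funpow_semiconj:
  assumes "\<And>x. h (g x) = g' (h x)"
  shows "h ((g ^^ k) x) = (g' ^^ k) (h x)"
  by (induction k) (simp_all add: assms)

lemma funpow_periodic_multiple:
  assumes "(g ^^ q) z = z"
  shows "(g ^^ (q * k)) z = z"
proof -
  have "((g ^^ q) ^^ k) z = z"
    by (induction k) (simp_all add: assms)
  then show ?thesis
    by (simp add: funpow_mult)
qed

lemma periodic_point_in_forward_invariant:
  assumes "(g ^^ q) z = z" "q \<ge> 1" "g ` A \<subseteq> A" "(g ^^ k) z \<in> A"
  shows "z \<in> A"
proof -
  have invariant: "(g ^^ j) x \<in> A" if "x \<in> A" for j x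
    using that assms(3) by (induction j) auto
  have "z = (g ^^ (q * k)) z"
    using funpow_periodic_multiple[OF assms(1)] by simp
  also have "\<dots> = (g ^^ (q * k - k)) ((g ^^ k) z)"
  proof -
    have "q * k = (q * k - k) + k"
      using assms(2) mult_le_mono1[of 1 q k] by simp
    then show ?thesis
      by (metis funpow_add comp_apply)
  qed
  finally show ?thesis
    using invariant[OF assms(4)] by metis
qed

lemma periodic_point_in_orbit:
  assumes "(g ^^ q) b = b" "q \<ge> 1" "(g ^^ j) b = a"
  shows "b \<in> range (\<lambda>i. (g ^^ i) a)"
proof (rule periodic_point_in_forward_invariant[OF assms(1,2)])
  show "g ` range (\<lambda>i. (g ^^ i) a) \<subseteq> range (\<lambda>i. (g ^^ i) a)"
  proof clarify
    fix i
    show "g ((g ^^ i) a) \<in> range (\<lambda>i. (g ^^ i) a)"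
      using rangeI[of "\<lambda>i. (g ^^ i) a" "Suc i"] by simp
  qed
  show "(g ^^ j) b \<in> range (\<lambda>i. (g ^^ i) a)"
    using assms(3) rangeI[of "\<lambda>i. (g ^^ i) a" 0] by simp
qed

lemma totally_periodic_complement_invariant:
  assumes "totally_periodic g S" "g ` S \<subseteq> S" "g ` A \<subseteq> A"
  shows "g ` (S - A) \<subseteq> S - A"
proof (rule image_subsetI)
  fix x
  assume x: "x \<in> S - A"
  obtain q where "q \<ge> 1" "(g ^^ q) x = x"
    using assms(1) x unfolding totally_periodic_def by blast
  then have "g x \<notin> A"
    using periodic_point_in_forward_invariant[where k = 1] assms(3) x by fastforce
  then show "g x \<in> S - A"
    using assms(2) x by blast
qed

lemma return_set_forward_invariant:
  assumes "m \<ge> 1" "\<And>x. x \<in> U \<Longrightarrow> (g ^^ m) x = x" "g ` S \<subseteq> S"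
  shows "g ` {x \<in> S. \<exists>j<m. (g ^^ j) x \<in> U} \<subseteq> {x \<in> S. \<exists>j<m. (g ^^ j) x \<in> U}"
proof (rule image_subsetI)
  fix x
  assume "x \<in> {x \<in> S. \<exists>j<m. (g ^^ j) x \<in> U}"
  then obtain j where "x \<in> S" "j < m" "(g ^^ j) x \<in> U"
    by blast
  moreover have "\<exists>i<m. (g ^^ i) (g x) \<in> U"
  proof (cases j)
    case 0
    then have "(g ^^ (m - 1)) (g x) \<in> U"
      using \<open>(g ^^ j) x \<in> U\<close> assms(1,2) by (metis Suc_diff_1 funpow_0 funpow_Suc_right comp_apply
          less_le_trans zero_less_one)
    then show ?thesis
      using assms(1) by (intro exI[of _ "m - 1"]) simp
  next
    case (Suc i)
    then show ?thesis
      using \<open>j < m\<close> \<open>(g ^^ j) x \<in> U\<close> by (intro exI[of _ i]) (simp add: funpow_swap1)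
  qed
  ultimately show "g x \<in> {x \<in> S. \<exists>j<m. (g ^^ j) x \<in> U}"
    using assms(3) by blast
qed

lemma finite_orbit_if_eventually_periodic:
  assumes "(g ^^ q) ((g ^^ k) x) = (g ^^ k) x" "q \<ge> 1"
  shows "finite (range (\<lambda>j. (g ^^ j) x))"
proof -
  have "(g ^^ j) x \<in> (\<lambda>j. (g ^^ j) x) ` {..<k + q}" for j
  proof (cases "j < k + q")
    case False
    have "(g ^^ j) x = (g ^^ (j - k)) ((g ^^ k) x)"
    proof -
      have "j = (j - k) + k"
        using False by simp
      then show ?thesis
        by (metis funpow_add comp_apply)
    qed
    also have "\<dots> = (g ^^ ((j - k) mod q)) ((g ^^ k) x)"
      using funpow_mod_eq[OF assms(1)] by simp
    also have "\<dots> = (g ^^ ((j - k) mod q + k)) x"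
      by (simp add: funpow_add)
    finally show ?thesis
      using assms(2) by (intro image_eqI[of _ _ "(j - k) mod q + k"]) auto
  qed auto
  then show ?thesis
    by (blast intro: finite_subset)
qed

section \<open>Omega-limit sets in topological spaces\<close>

lemma omega_limit_subset_topspace: "omega_limit T g y \<subseteq> topspace T"
  unfolding omega_limit_def using limitin_topspace by fastforce

lemma omega_limit_frequently:
  assumes "z \<in> omega_limit T g y" "openin T U" "z \<in> U"
  shows "\<exists>k\<ge>N. (g ^^ k) y \<in> U"
proof -
  obtain r where r: "filterlim r at_top sequentially"
    and lim: "limitin T (\<lambda>k. (g ^^ r k) y) z sequentially"
    using assms(1) unfolding omega_limit_def by blast
  have "eventually (\<lambda>k. (g ^^ r k) y \<in> U) sequentially"
    using lim assms(2,3) unfolding limitin_def by blast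
  moreover have "eventually (\<lambda>k. N \<le> r k) sequentially"
    using r filterlim_at_top by blast
  ultimately obtain k where "(g ^^ r k) y \<in> U" "N \<le> r k"
    using eventually_happens'[OF trivial_limit_sequentially eventually_conj] by blast
  then show ?thesis
    by blast
qed

lemma omega_limitI:
  assumes "first_countable T" "z \<in> topspace T"
    and visits: "\<And>U N. openin T U \<Longrightarrow> z \<in> U \<Longrightarrow> \<exists>k\<ge>N. (g ^^ k) y \<in> U"
  shows "z \<in> omega_limit T g y"
proof -
  obtain \<B> where "countable \<B>" and \<B>_open: "\<forall>V\<in>\<B>. openin T V"
    and \<B>_base: "\<forall>U. openin T U \<and> z \<in> U \<longrightarrow> (\<exists>V\<in>\<B>. z \<in> V \<and> V \<subseteq> U)"
    using bspec[OF assms(1)[unfolded first_countable_def] assms(2)] by blast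
  define \<N> where "\<N> = {V \<in> \<B>. z \<in> V}"
  have "countable \<N>"
    using \<open>countable \<B>\<close> by (simp add: \<N>_def)
  have "\<N> \<noteq> {}"
    using \<B>_base assms(2) by (auto simp: \<N>_def)
  define V where "V m = (\<Inter>i\<le>m. from_nat_into \<N> i)" for m
  have V_nhd: "openin T (V m) \<and> z \<in> V m" for m
    using from_nat_into[OF \<open>\<N> \<noteq> {}\<close>] \<B>_open unfolding V_def \<N>_def by auto
  have V_small: "\<exists>i. \<forall>m\<ge>i. V m \<subseteq> U" if U: "openin T U" "z \<in> U" for U
  proof -
    obtain W where "W \<in> \<N>" "W \<subseteq> U"
      using \<B>_base U unfolding \<N>_def by blast
    then obtain i where "from_nat_into \<N> i \<subseteq> U"
      using from_nat_into_surj[OF \<open>countable \<N>\<close>] by metis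
    then show ?thesis
      unfolding V_def by blast
  qed
  have "\<forall>m. \<exists>k\<ge>m. (g ^^ k) y \<in> V m"
    using visits V_nhd by blast
  then obtain r where r: "\<And>m. m \<le> r m \<and> (g ^^ r m) y \<in> V m"
    by metis
  have "filterlim r at_top sequentially"
    unfolding filterlim_at_top eventually_sequentially using r le_trans by blast
  moreover have "limitin T (\<lambda>m. (g ^^ r m) y) z sequentially"
    unfolding limitin_def
  proof (intro conjI allI impI assms(2))
    fix U
    assume "openin T U \<and> z \<in> U"
    then obtain i where "\<forall>m\<ge>i. V m \<subseteq> U"
      using V_small by blast
    then show "eventually (\<lambda>m. (g ^^ r m) y \<in> U) sequentially"
      unfolding eventually_sequentially using r by blast
  qed
  ultimately show ?thesis
    unfolding omega_limit_def by blast
qed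

lemma not_in_omega_limitE:
  assumes "first_countable T" "z \<in> topspace T" "z \<notin> omega_limit T g y"
  obtains U N where "openin T U" "z \<in> U" "\<forall>k\<ge>N. (g ^^ k) y \<notin> U"
proof -
  have "\<not> (\<forall>U N. openin T U \<longrightarrow> z \<in> U \<longrightarrow> (\<exists>k\<ge>N. (g ^^ k) y \<in> U))"
    using omega_limitI[OF assms(1,2), of g y] assms(3) by blast
  then show ?thesis
    using that by blast
qed

lemma closedin_omega_limit:
  assumes "first_countable T"
  shows "closedin T (omega_limit T g y)"
  unfolding closedin_def
proof (intro conjI omega_limit_subset_topspace)
  show "openin T (topspace T - omega_limit T g y)"
  proof (subst openin_subopen, intro ballI)
    fix x
    assume x: "x \<in> topspace T - omega_limit T g y"
    then obtain U N where U: "openin T U" "x \<in> U" and avoid: "\<forall>k\<ge>N. (g ^^ k) y \<notin> U"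
      using not_in_omega_limitE[OF assms] by blast
    have "U \<subseteq> topspace T - omega_limit T g y"
      using omega_limit_frequently[OF _ U(1), of _ g y N] avoid openin_subset[OF U(1)] by blast
    then show "\<exists>U'. openin T U' \<and> x \<in> U' \<and> U' \<subseteq> topspace T - omega_limit T g y"
      using U by blast
  qed
qed

lemma omega_limit_forward_invariant:
  assumes "continuous_map T T g"
  shows "g ` omega_limit T g y \<subseteq> omega_limit T g y"
proof clarify
  fix z
  assume "z \<in> omega_limit T g y"
  then obtain r where r: "filterlim r at_top sequentially"
    and lim: "limitin T (\<lambda>k. (g ^^ r k) y) z sequentially"
    unfolding omega_limit_def by blast
  have "limitin T (\<lambda>k. (g ^^ Suc (r k)) y) (g z) sequentially"
    using continuous_map_limit[OF assms lim] by (simp add: o_def)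
  moreover have "filterlim (\<lambda>k. Suc (r k)) at_top sequentially"
    using filterlim_compose[OF filterlim_Suc r] by (simp add: o_def)
  ultimately show "g z \<in> omega_limit T g y"
    unfolding omega_limit_def by blast
qed

lemma omega_limit_funpow_invariant:
  assumes "continuous_map T T g" "z \<in> omega_limit T g y"
  shows "(g ^^ k) z \<in> omega_limit T g y"
  using omega_limit_forward_invariant[OF assms(1)] assms(2) by (induction k) auto

lemma image_omega_limit_subset_closedin:
  assumes "continuous_map T T' h" "closedin T' R" "\<And>k. h ((g ^^ k) y) \<in> R"
  shows "h ` omega_limit T g y \<subseteq> R"
proof clarify
  fix z
  assume "z \<in> omega_limit T g y"
  then obtain r where "limitin T (\<lambda>k. (g ^^ r k) y) z sequentially"
    unfolding omega_limit_def by blast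
  then have "limitin T' (\<lambda>k. h ((g ^^ r k) y)) (h z) sequentially"
    using continuous_map_limit[OF assms(1)] by (simp add: o_def)
  then show "h z \<in> R"
    by (rule limitin_closedin[OF _ assms(2)]) (simp_all add: assms(3))
qed

lemma eventually_avoids_closedin_disjoint_omega_limit:
  assumes "compact_space T" "first_countable T" "closedin T K"
    and disjoint: "K \<inter> omega_limit T g y = {}"
  shows "\<exists>N. \<forall>k\<ge>N. (g ^^ k) y \<notin> K"
proof (rule ccontr)
  assume "\<nexists>N. \<forall>k\<ge>N. (g ^^ k) y \<notin> K"
  then have visits: "\<exists>k\<ge>N. (g ^^ k) y \<in> K" for N
    by blast
  have "\<exists>U N. openin T U \<and> z \<in> U \<and> (\<forall>k\<ge>N. (g ^^ k) y \<notin> U)" if "z \<in> K" for z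
  proof -
    have "z \<in> topspace T" "z \<notin> omega_limit T g y"
      using that disjoint closedin_subset[OF assms(3)] by auto
    then show ?thesis
      using not_in_omega_limitE[OF assms(2)] by metis
  qed
  then obtain U N where U: "\<And>z. z \<in> K \<Longrightarrow> openin T (U z) \<and> z \<in> U z"
    and avoid: "\<And>z k. z \<in> K \<Longrightarrow> k \<ge> N z \<Longrightarrow> (g ^^ k) y \<notin> U z"
    by metis
  have "compactin T K"
    using closedin_compact_space[OF assms(1,3)] .
  then obtain \<F> where "finite \<F>" "\<F> \<subseteq> U ` K" "K \<subseteq> \<Union>\<F>"
    unfolding compactin_def using U by (metis (no_types, lifting) UN_I imageE subsetI)
  then obtain K' where K': "finite K'" "K' \<subseteq> K" "K \<subseteq> (\<Union>z\<in>K'. U z)"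
    by (metis finite_subset_image)
  obtain k where k: "k \<ge> (\<Sum>z\<in>K'. N z)" "(g ^^ k) y \<in> K"
    using visits by blast
  then obtain z where "z \<in> K'" "(g ^^ k) y \<in> U z"
    using K'(3) by blast
  moreover have "N z \<le> k"
    using member_le_sum[OF \<open>z \<in> K'\<close> _ K'(1), of N] k(1) by simp
  ultimately show False
    using avoid K'(2) by blast
qed

text \<open>Separate \<open>A\<close> and \<open>B\<close> by disjoint open sets \<open>U\<close> and \<open>V\<close>. The orbit eventually stays in
  \<open>U' \<union> V'\<close>, where \<open>U' = U \<inter> g -` U\<close> and \<open>V' = V \<inter> g -` V\<close>; once it is in \<open>U'\<close> its next
  point lies in \<open>U\<close>, hence not in \<open>V'\<close>, so it never leaves \<open>U'\<close> and cannot come close to \<open>B\<close>.\<close>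

lemma omega_limit_not_split:
  assumes T: "compact_space T" "Hausdorff_space T" "first_countable T"
    and g: "continuous_map T T g" and y: "y \<in> topspace T"
    and A: "closedin T A" "g ` A \<subseteq> A" and B: "closedin T B" "g ` B \<subseteq> B"
    and split: "A \<union> B = omega_limit T g y" "A \<inter> B = {}"
  shows "A = {} \<or> B = {}"
proof (rule ccontr)
  assume "\<not> (A = {} \<or> B = {})"
  then obtain a b where "a \<in> A" "b \<in> B"
    by blast
  have "compactin T A" "compactin T B" "disjnt A B"
    using closedin_compact_space[OF T(1)] A(1) B(1) split(2) by (auto simp: disjnt_def)
  then obtain U V where UV: "openin T U" "openin T V" "A \<subseteq> U" "B \<subseteq> V" "disjnt U V"
    using T(2) Hausdorff_space_compact_sets by metis
  define U' where "U' = {x \<in> topspace T. g x \<in> U} \<inter> U"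
  define V' where "V' = {x \<in> topspace T. g x \<in> V} \<inter> V"
  have "openin T U'" "openin T V'"
    unfolding U'_def V'_def using openin_continuous_map_preimage[OF g] UV(1,2) by blast+
  have "A \<subseteq> U'"
    unfolding U'_def using A UV(3) closedin_subset[OF A(1)] by auto
  have "B \<subseteq> V'"
    unfolding V'_def using B UV(4) closedin_subset[OF B(1)] by auto
  define K where "K = topspace T - (U' \<union> V')"
  have "closedin T K"
    unfolding K_def using \<open>openin T U'\<close> \<open>openin T V'\<close> by blast
  moreover have "K \<inter> omega_limit T g y = {}"
    unfolding K_def using split(1) \<open>A \<subseteq> U'\<close> \<open>B \<subseteq> V'\<close> by blast
  ultimately obtain N where "\<forall>k\<ge>N. (g ^^ k) y \<notin> K"
    using eventually_avoids_closedin_disjoint_omega_limit[OF T(1,3)] by blast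
  moreover have orbit: "(g ^^ k) y \<in> topspace T" for k
    using continuous_map_funpow[OF g] y continuous_map_image_subset_topspace by blast
  ultimately have eventually_UV: "(g ^^ k) y \<in> U' \<union> V'" if "k \<ge> N" for k
    using that unfolding K_def by blast
  obtain k1 where k1: "k1 \<ge> N" "(g ^^ k1) y \<in> U'"
    using omega_limit_frequently[OF _ \<open>openin T U'\<close>] \<open>a \<in> A\<close> \<open>A \<subseteq> U'\<close> split(1) by blast
  have stay: "(g ^^ (k1 + j)) y \<in> U'" for j
  proof (induction j)
    case (Suc j)
    then have "(g ^^ (k1 + Suc j)) y \<in> U"
      unfolding U'_def by simp
    moreover have "(g ^^ (k1 + Suc j)) y \<in> U' \<union> V'"
      using eventually_UV[of "k1 + Suc j"] k1(1) by linarith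
    ultimately show ?case
      using UV(5) unfolding V'_def disjnt_def by blast
  qed (simp add: k1)
  obtain k2 where "k2 \<ge> k1" "(g ^^ k2) y \<in> V"
    using omega_limit_frequently[OF _ UV(2)] \<open>b \<in> B\<close> UV(4) split(1) by blast
  then show False
    using stay[of "k2 - k1"] UV(5) unfolding U'_def disjnt_def by auto
qed

lemma topspace_subtopology_omega_limit:
  "topspace (subtopology T (omega_limit T g y)) = omega_limit T g y"
  using omega_limit_subset_topspace[of T g y] by auto

lemma continuous_map_subtopology_omega_limit:
  assumes "continuous_map T T g"
  shows "continuous_map (subtopology T (omega_limit T g y)) (subtopology T (omega_limit T g y)) g"
  using omega_limit_forward_invariant[OF assms]
  by (auto simp: continuous_map_in_subtopology continuous_map_from_subtopology[OF assms])

lemma closedin_return_set: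
  assumes "continuous_map X X g" "closedin X U"
  shows "closedin X {x \<in> topspace X. \<exists>j<m. (g ^^ j) x \<in> U}"
proof -
  have "{x \<in> topspace X. \<exists>j<m. (g ^^ j) x \<in> U} = (\<Union>j<m. {x \<in> topspace X. (g ^^ j) x \<in> U})"
    by blast
  then show ?thesis
    using closedin_continuous_map_preimage[OF continuous_map_funpow[OF assms(1)] assms(2)]
    by (auto intro: closedin_Union)
qed

lemma openin_return_set:
  assumes "continuous_map X X g" "openin X U"
  shows "openin X {x \<in> topspace X. \<exists>j<m. (g ^^ j) x \<in> U}"
proof -
  have "{x \<in> topspace X. \<exists>j<m. (g ^^ j) x \<in> U} = (\<Union>j<m. {x \<in> topspace X. (g ^^ j) x \<in> U})"
    by blast
  then show ?thesis
    using openin_continuous_map_preimage[OF continuous_map_funpow[OF assms(1)] assms(2)]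
    by (auto intro: openin_Union)
qed

lemma omega_limit_enters_clopen:
  assumes T: "compact_space T" "Hausdorff_space T" "first_countable T"
    and g: "continuous_map T T g" and y: "y \<in> topspace T"
    and periodic: "totally_periodic g (omega_limit T g y)"
    and U: "closedin (subtopology T (omega_limit T g y)) U"
      "openin (subtopology T (omega_limit T g y)) U" "U \<noteq> {}"
    and m: "m \<ge> 1" "\<And>x. x \<in> U \<Longrightarrow> (g ^^ m) x = x"
    and z: "z \<in> omega_limit T g y"
  shows "\<exists>j<m. (g ^^ j) z \<in> U"
proof -
  define \<Omega> where "\<Omega> = omega_limit T g y"
  define S where "S = subtopology T \<Omega>"
  define A where "A = {x \<in> topspace S. \<exists>j<m. (g ^^ j) x \<in> U}"
  have topspace_S: "topspace S = \<Omega>"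
    unfolding S_def \<Omega>_def by (rule topspace_subtopology_omega_limit)
  have g_S: "continuous_map S S g"
    unfolding S_def \<Omega>_def using continuous_map_subtopology_omega_limit[OF g] .
  have "closedin S A"
    unfolding A_def by (rule closedin_return_set[OF g_S]) (use U(1) in \<open>simp add: S_def \<Omega>_def\<close>)
  moreover have "closedin S (\<Omega> - A)"
  proof -
    have "openin S A"
      unfolding A_def by (rule openin_return_set[OF g_S]) (use U(2) in \<open>simp add: S_def \<Omega>_def\<close>)
    then show ?thesis
      using closedin_diff[OF closedin_topspace, of S A] topspace_S by simp
  qed
  moreover have "closedin T \<Omega>"
    unfolding \<Omega>_def using closedin_omega_limit[OF T(3)] .
  ultimately have closed: "closedin T A" "closedin T (\<Omega> - A)"
    unfolding S_def using closedin_trans_full by blast+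
  have "g ` \<Omega> \<subseteq> \<Omega>"
    unfolding \<Omega>_def using omega_limit_forward_invariant[OF g] .
  then have invariant_A: "g ` A \<subseteq> A"
    unfolding A_def topspace_S using return_set_forward_invariant[OF m(1) m(2)] by blast
  have invariant_complement: "g ` (\<Omega> - A) \<subseteq> \<Omega> - A"
    using periodic \<open>g ` \<Omega> \<subseteq> \<Omega>\<close> invariant_A unfolding \<Omega>_def by (rule totally_periodic_complement_invariant)
  have "A \<subseteq> \<Omega>"
    unfolding A_def topspace_S by blast
  then have "A \<union> (\<Omega> - A) = omega_limit T g y" "A \<inter> (\<Omega> - A) = {}"
    unfolding \<Omega>_def by blast+
  then have "A = {} \<or> \<Omega> - A = {}"
    by (rule omega_limit_not_split[OF T g y closed(1) invariant_A closed(2) invariant_complement])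
  moreover have "U \<subseteq> A"
  proof -
    have "U \<subseteq> topspace S"
      using openin_subset[OF U(2)] unfolding S_def \<Omega>_def .
    then show ?thesis
      unfolding A_def using m(1) by (auto intro!: exI[of _ 0])
  qed
  ultimately have "z \<in> A"
    using U(3) z unfolding \<Omega>_def by blast
  then show ?thesis
    unfolding A_def by blast
qed

lemma nonempty_open_fixed_by_iterate:
  assumes X: "compact_space X" "Hausdorff_space X" and g: "continuous_map X X g"
    and nonempty: "topspace X \<noteq> {}"
    and periodic: "\<And>z. z \<in> topspace X \<Longrightarrow> \<exists>m\<ge>1. (g ^^ m) z = z"
  obtains m W where "m \<ge> 1" "openin X W" "W \<noteq> {}" "\<forall>x\<in>W. (g ^^ m) x = x"
proof -
  define Fix where "Fix m = {z \<in> topspace X. (g ^^ m) z = id z}" for m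
  have closed: "closedin X (Fix m)" for m
    unfolding Fix_def
    using closedin_continuous_maps_eq[OF X(2) continuous_map_funpow[OF g] continuous_map_id] .
  have cover: "\<Union>(Fix ` {1..}) = topspace X"
    using periodic unfolding Fix_def by fastforce
  have "\<exists>m\<in>{1..}. X interior_of Fix m \<noteq> {}"
  proof (rule ccontr)
    assume "\<not> (\<exists>m\<in>{1..}. X interior_of Fix m \<noteq> {})"
    then have "X interior_of \<Union>(Fix ` {1..}) = {}"
      using closed X compact_imp_locally_compact_space compact_Hausdorff_imp_regular_space
      by (intro Baire_category_alt) auto
    then show False
      using cover nonempty interior_of_topspace by metis
  qed
  then obtain m where "m \<ge> 1" "X interior_of Fix m \<noteq> {}"
    by auto
  moreover have "(g ^^ m) x = x" if "x \<in> X interior_of Fix m" for x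
    using interior_of_subset[of X "Fix m"] that unfolding Fix_def by auto
  ultimately show ?thesis
    using that[of m "X interior_of Fix m"] by (simp add: openin_interior_of)
qed

lemma clopen_nbhd_of_singleton_component:
  assumes "compact_space X" "Hausdorff_space X" "connected_component_of_set X a = {a}"
    and "openin X W" "a \<in> W"
  obtains U where "closedin X U" "openin X U" "a \<in> U" "U \<subseteq> W"
proof -
  have "a \<in> topspace X"
    using assms(4,5) openin_subset by blast
  then have "{a} \<in> connected_components_of X" "compactin X {a}"
    using assms(3) connected_component_in_connected_components_of[of X a] by auto
  then obtain U V where UV: "openin X U" "openin X V" "disjnt U V" "U \<union> V = topspace X"
    and "{a} \<subseteq> U" "U \<subseteq> W"
    using wilder_locally_compact_component_thm[OF compact_imp_locally_compact_space[OF assms(1)] assms(2)]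
      assms(4,5) by (metis empty_subsetI insert_subset)
  have "topspace X - U = V"
    using UV(2-4) openin_subset unfolding disjnt_def by blast
  then have "closedin X U"
    using UV(1,2) openin_subset unfolding closedin_def by metis
  then show ?thesis
    using that UV(1) \<open>{a} \<subseteq> U\<close> \<open>U \<subseteq> W\<close> by blast
qed

lemma compactin_connected_component_of_omega_limit:
  assumes "compact_space T" "first_countable T"
  shows "compactin T (connected_component_of_set (subtopology T (omega_limit T g y)) a)"
proof -
  have "compact_space (subtopology T (omega_limit T g y))"
    by (intro compact_space_subtopology closedin_compact_space[OF assms(1)] closedin_omega_limit assms(2))
  then have "compactin (subtopology T (omega_limit T g y))
      (connected_component_of_set (subtopology T (omega_limit T g y)) a)"
    by (rule closedin_compact_space[OF _ closedin_connected_component_of])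
  then show ?thesis
    by (simp add: compactin_subtopology)
qed

lemma omega_limit_subset_orbit:
  assumes T: "compact_space T" "Hausdorff_space T" "first_countable T"
    and g: "continuous_map T T g" and y: "y \<in> topspace T"
    and periodic: "totally_periodic g (omega_limit T g y)"
    and components: "\<And>a. a \<in> omega_limit T g y \<Longrightarrow>
      connected_component_of_set (subtopology T (omega_limit T g y)) a = {a}"
    and W: "openin (subtopology T (omega_limit T g y)) W" "\<And>x. x \<in> W \<Longrightarrow> (g ^^ m) x = x"
    and "m \<ge> 1" "a \<in> W"
  shows "omega_limit T g y \<subseteq> range (\<lambda>j. (g ^^ j) a)"
proof
  fix b
  assume b: "b \<in> omega_limit T g y"
  show "b \<in> range (\<lambda>j. (g ^^ j) a)"
  proof (rule ccontr)
    assume b_off_orbit: "b \<notin> range (\<lambda>j. (g ^^ j) a)"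
    define S where "S = subtopology T (omega_limit T g y)"
    define Q where "Q = (\<lambda>j. (g ^^ j) b) ` {..<m}"
    have S: "compact_space S" "Hausdorff_space S"
      unfolding S_def
      using compact_space_subtopology closedin_compact_space[OF T(1) closedin_omega_limit[OF T(3)]]
        Hausdorff_space_subtopology[OF T(2)] by auto
    have "a \<notin> Q"
    proof
      assume "a \<in> Q"
      then obtain j where "(g ^^ j) b = a"
        unfolding Q_def by blast
      moreover obtain q where "q \<ge> 1" "(g ^^ q) b = b"
        using periodic b unfolding totally_periodic_def by blast
      ultimately show False
        using periodic_point_in_orbit b_off_orbit by metis
    qed
    have "Q \<subseteq> topspace S"
      unfolding Q_def S_def topspace_subtopology_omega_limit
      using omega_limit_funpow_invariant[OF g b] by blast
    then have "closedin S Q"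
      by (rule closedin_Hausdorff_finite[OF S(2)]) (simp add: Q_def)
    then have "openin S (W - Q)"
      using W(1) unfolding S_def by (rule openin_diff[rotated])
    moreover have "a \<in> omega_limit T g y"
      using openin_subset[OF W(1)] \<open>a \<in> W\<close> by auto
    ultimately obtain U where U: "closedin S U" "openin S U" "a \<in> U" "U \<subseteq> W - Q"
      using clopen_nbhd_of_singleton_component[OF S] components \<open>a \<in> W\<close> \<open>a \<notin> Q\<close>
      unfolding S_def by blast
    moreover have "U \<noteq> {}" "\<And>x. x \<in> U \<Longrightarrow> (g ^^ m) x = x"
      using U(3,4) W(2) by auto
    ultimately obtain j where "j < m" "(g ^^ j) b \<in> U"
      using omega_limit_enters_clopen[OF T g y periodic _ _ _ \<open>m \<ge> 1\<close> _ b] unfolding S_def by blast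
    then show False
      using U(4) unfolding Q_def by blast
  qed
qed

theorem finite_omega_limit_if_totally_periodic:
  assumes T: "compact_space T" "Hausdorff_space T" "first_countable T"
    and g: "continuous_map T T g" and y: "y \<in> topspace T"
    and periodic: "totally_periodic g (omega_limit T g y)"
    and components: "\<And>a. a \<in> omega_limit T g y \<Longrightarrow>
      connected_component_of_set (subtopology T (omega_limit T g y)) a = {a}"
  shows "finite (omega_limit T g y)"
proof (cases "omega_limit T g y = {}")
  case False
  define S where "S = subtopology T (omega_limit T g y)"
  have S: "compact_space S" "Hausdorff_space S" "continuous_map S S g"
    unfolding S_def
    using compact_space_subtopology closedin_compact_space[OF T(1) closedin_omega_limit[OF T(3)]]
      Hausdorff_space_subtopology[OF T(2)] continuous_map_subtopology_omega_limit[OF g] by auto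
  have "topspace S \<noteq> {}" "\<And>z. z \<in> topspace S \<Longrightarrow> \<exists>q\<ge>1. (g ^^ q) z = z"
    using False periodic unfolding S_def topspace_subtopology_omega_limit totally_periodic_def by auto
  then obtain m W where m: "m \<ge> 1" and W: "openin S W" "W \<noteq> {}" "\<forall>x\<in>W. (g ^^ m) x = x"
    by (rule nonempty_open_fixed_by_iterate[OF S])
  then obtain a where "a \<in> W"
    by blast
  have "omega_limit T g y \<subseteq> range (\<lambda>j. (g ^^ j) a)"
    using omega_limit_subset_orbit[OF T g y periodic components W(1)[unfolded S_def] _ m \<open>a \<in> W\<close>] W(3)
    by blast
  moreover have "a \<in> omega_limit T g y"
    using \<open>a \<in> W\<close> openin_subset[OF W(1)] unfolding S_def topspace_subtopology_omega_limit by blast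
  then obtain p where "p \<ge> 1" "(g ^^ p) a = a"
    using periodic unfolding totally_periodic_def by blast
  then have "finite (range (\<lambda>j. (g ^^ j) a))"
    using finite_orbit_if_eventually_periodic[where k = 0] by simp
  ultimately show ?thesis
    using finite_subset by blast
qed simp

section \<open>Completely regular continua and their finite products\<close>

lemma finite_image_omega_limit_if_hits_periodic:
  fixes h :: "'a \<Rightarrow> 'b::t1_space"
  assumes h: "continuous_map T euclidean h" and semiconj: "\<And>x. h (g x) = g' (h x)"
    and "(g ^^ q) z = z" "q \<ge> 1" "h ((g ^^ k) y) = h z"
  shows "finite (h ` omega_limit T g y)"
proof -
  have h_orbit: "h ((g ^^ j) x) = (g' ^^ j) (h x)" for j x
    by (rule funpow_semiconj[where h = h and g = g and g' = g', OF semiconj])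
  have "(g' ^^ q) ((g' ^^ k) (h y)) = (g' ^^ k) (h y)"
    using assms(3,5) by (simp flip: h_orbit)
  then have "finite (range (\<lambda>j. (g' ^^ j) (h y)))"
    using assms(4) by (rule finite_orbit_if_eventually_periodic)
  moreover have "h ` omega_limit T g y \<subseteq> range (\<lambda>j. (g' ^^ j) (h y))"
  proof (rule image_omega_limit_subset_closedin[OF h])
    show "closedin euclidean (range (\<lambda>j. (g' ^^ j) (h y)))"
      using finite_imp_closed[OF \<open>finite (range (\<lambda>j. (g' ^^ j) (h y)))\<close>] by simp
    show "h ((g ^^ k) y) \<in> range (\<lambda>j. (g' ^^ j) (h y))" for k
      by (simp add: h_orbit)
  qed
  ultimately show ?thesis
    by (rule finite_subset[rotated])
qed

lemma omega_limit_connected_image_trivial: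
  fixes h :: "'b \<Rightarrow> 'a::metric_space"
  assumes Y: "completely_regular_continuum Y"
    and h: "continuous_map T (top_of_set Y) h" and semiconj: "\<And>x. h (g x) = g' (h x)"
    and periodic: "totally_periodic g (omega_limit T g y)"
    and C: "C \<subseteq> omega_limit T g y" "connectedin T C" "compactin T C"
    and "a \<in> C" "c \<in> C"
  shows "h a = h c"
proof (rule ccontr)
  assume "h a \<noteq> h c"
  define D where "D = h ` C"
  have "D \<subseteq> Y" "connected D" "compact D"
    using connectedin_continuous_map_image[OF h C(2)] image_compactin[OF C(3) h]
    unfolding D_def by (auto simp: connectedin_subtopology compactin_subtopology)
  moreover have "h a \<in> D" "h c \<in> D"
    unfolding D_def using \<open>a \<in> C\<close> \<open>c \<in> C\<close> by auto
  moreover have "continuum D"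
    unfolding continuum_def using \<open>connected D\<close> \<open>compact D\<close> \<open>h a \<in> D\<close> by blast
  ultimately have "top_of_set Y interior_of D \<noteq> {}"
    using Y[unfolded completely_regular_continuum_def] \<open>h a \<noteq> h c\<close> by blast
  define I where "I = top_of_set Y interior_of D"
  have "I \<subseteq> h ` C"
    unfolding I_def D_def by (rule interior_of_subset)
  obtain w where "w \<in> I"
    using \<open>top_of_set Y interior_of D \<noteq> {}\<close> unfolding I_def by blast
  then obtain z where "z \<in> C" and "h z \<in> I"
    using \<open>I \<subseteq> h ` C\<close> by auto
  then have z: "z \<in> omega_limit T g y" "z \<in> {x \<in> topspace T. h x \<in> I}"
    using C(1) omega_limit_subset_topspace[of T g y] by auto
  have "openin T {x \<in> topspace T. h x \<in> I}"
    unfolding I_def by (rule openin_continuous_map_preimage[OF h openin_interior_of])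
  then obtain k where "(g ^^ k) y \<in> {x \<in> topspace T. h x \<in> I}"
    using omega_limit_frequently[OF z(1) _ z(2)] by blast
  then have "h ((g ^^ k) y) \<in> I"
    by blast
  then obtain z' where "z' \<in> C" and hit: "h ((g ^^ k) y) = h z'"
    using \<open>I \<subseteq> h ` C\<close> by blast
  obtain q where q: "(g ^^ q) z' = z'" "q \<ge> 1"
    using periodic \<open>z' \<in> C\<close> C(1) unfolding totally_periodic_def by blast
  have "finite (h ` omega_limit T g y)"
    by (rule finite_image_omega_limit_if_hits_periodic[where g' = g',
          OF continuous_map_into_fulltopology[OF h] semiconj q hit])
  then have "finite D"
    unfolding D_def using C(1) by (meson finite_subset image_mono)
  then show False
    using connected_finite_iff_sing[OF \<open>connected D\<close>] \<open>h a \<in> D\<close> \<open>h c \<in> D\<close> \<open>h a \<noteq> h c\<close> by auto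
qed

lemma continuous_map_prod_map:
  assumes "\<And>i. i < n \<Longrightarrow> continuous_on (X i) (f i)" "\<And>i. i < n \<Longrightarrow> f i ` X i \<subseteq> X i"
  shows "continuous_map (product_topology (\<lambda>i. top_of_set (X i)) {..<n})
    (product_topology (\<lambda>i. top_of_set (X i)) {..<n}) (prod_map n f)"
  unfolding continuous_map_componentwise
proof (intro conjI ballI)
  show "prod_map n f ` topspace (product_topology (\<lambda>i. top_of_set (X i)) {..<n}) \<subseteq> extensional {..<n}"
    by (auto simp: prod_map_def)
  fix k
  assume k: "k \<in> {..<n}"
  have "continuous_map (top_of_set (X k)) (top_of_set (X k)) (f k)"
    using assms k by (simp add: continuous_map_subtopology_eu image_subset_iff_funcset)
  then have "continuous_map (product_topology (\<lambda>i. top_of_set (X i)) {..<n}) (top_of_set (X k))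
      (f k \<circ> (\<lambda>x. x k))"
    by (rule continuous_map_compose[OF continuous_map_product_projection[OF k]])
  moreover have "f k \<circ> (\<lambda>x. x k) = (\<lambda>x. prod_map n f x k)"
    using k by (auto simp: prod_map_def)
  ultimately show "continuous_map (product_topology (\<lambda>i. top_of_set (X i)) {..<n}) (top_of_set (X k))
      (\<lambda>x. prod_map n f x k)"
    by simp
qed

lemma compact_space_product_of_compact:
  assumes "\<And>i. i \<in> I \<Longrightarrow> compact (X i)"
  shows "compact_space (product_topology (\<lambda>i. top_of_set (X i)) I)"
  using assms by (auto simp: compact_space_product_topology intro!: compact_space_subtopology)

lemma first_countable_finite_product:
  fixes X :: "'i \<Rightarrow> 'a::metric_space set"
  assumes "finite I"
  shows "first_countable (product_topology (\<lambda>i. top_of_set (X i)) I)"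
proof -
  have "countable {i \<in> I. \<not> (\<exists>a. topspace (top_of_set (X i)) \<subseteq> {a})}"
    using assms by (intro countable_finite) auto
  then show ?thesis
    by (intro metrizable_imp_first_countable)
      (simp add: metrizable_space_product_topology metrizable_space_subtopology metrizable_space_euclidean)
qed

lemma connected_component_of_omega_limit_prod_map:
  fixes n :: nat and X :: "nat \<Rightarrow> 'a::metric_space set"
  defines "P \<equiv> product_topology (\<lambda>i. top_of_set (X i)) {..<n}"
  assumes X: "\<And>i. i < n \<Longrightarrow> completely_regular_continuum (X i)"
    and periodic: "totally_periodic (prod_map n f) (omega_limit P (prod_map n f) y)"
    and a: "a \<in> omega_limit P (prod_map n f) y"
  shows "connected_component_of_set (subtopology P (omega_limit P (prod_map n f) y)) a = {a}"
proof -
  define \<Omega> where "\<Omega> = omega_limit P (prod_map n f) y"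
  define C where "C = connected_component_of_set (subtopology P \<Omega>) a"
  have "compact_space P"
    unfolding P_def using X
    by (intro compact_space_product_of_compact) (auto simp: completely_regular_continuum_def continuum_def)
  then have "compactin P C"
    unfolding C_def \<Omega>_def P_def
    by (intro compactin_connected_component_of_omega_limit first_countable_finite_product finite_lessThan)
  moreover have "connectedin (subtopology P \<Omega>) C"
    unfolding C_def by (rule connectedin_connected_component_of)
  then have "connectedin P C" "C \<subseteq> \<Omega>"
    by (simp_all add: connectedin_subtopology)
  moreover have "a \<in> C"
    unfolding C_def \<Omega>_def using a omega_limit_subset_topspace[of P "prod_map n f" y]
    by (auto simp: connected_component_of_refl)
  moreover have "c = a" if "c \<in> C" for c
  proof -
    have "a i = c i" if "i < n" for i
    proof (rule omega_limit_connected_image_trivial[OF X[OF that], where h = "\<lambda>x. x i" and g' = "f i"])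
      show "continuous_map P (top_of_set (X i)) (\<lambda>x. x i)"
        unfolding P_def using that by (intro continuous_map_product_projection) simp
      show "prod_map n f x i = f i (x i)" for x
        using that by (simp add: prod_map_def)
    qed (use periodic \<open>compactin P C\<close> \<open>connectedin P C\<close> \<open>C \<subseteq> \<Omega>\<close> \<open>a \<in> C\<close> \<open>c \<in> C\<close> in
      \<open>simp_all add: \<Omega>_def\<close>)
    moreover have "C \<subseteq> PiE {..<n} X"
      using \<open>C \<subseteq> \<Omega>\<close> omega_limit_subset_topspace[of P "prod_map n f" y]
      unfolding \<Omega>_def P_def by simp
    then have "a \<in> extensional {..<n}" "c \<in> extensional {..<n}"
      using \<open>a \<in> C\<close> \<open>c \<in> C\<close> by (auto simp: PiE_iff)
    ultimately show "c = a"
      by (auto intro: extensionalityI)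
  qed
  ultimately show ?thesis
    unfolding C_def \<Omega>_def by blast
qed

theorem proposition1p7:
  fixes n :: nat and X :: "nat \<Rightarrow> 'a::metric_space set" and f :: "nat \<Rightarrow> 'a \<Rightarrow> 'a"
    and y :: "nat \<Rightarrow> 'a"
  assumes "\<And>i. i < n \<Longrightarrow> completely_regular_continuum (X i)"
    and "\<And>i. i < n \<Longrightarrow> continuous_on (X i) (f i)"
    and "\<And>i. i < n \<Longrightarrow> f i ` X i \<subseteq> X i"
    and "y \<in> PiE {..<n} X"
    and "totally_periodic (prod_map n f)
           (omega_limit (product_topology (\<lambda>i. top_of_set (X i)) {..<n}) (prod_map n f) y)"
  shows "finite (omega_limit (product_topology (\<lambda>i. top_of_set (X i)) {..<n}) (prod_map n f) y)"
proof (rule finite_omega_limit_if_totally_periodic)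
  show "compact_space (product_topology (\<lambda>i. top_of_set (X i)) {..<n})"
    using assms(1)
    by (intro compact_space_product_of_compact) (auto simp: completely_regular_continuum_def continuum_def)
  show "Hausdorff_space (product_topology (\<lambda>i. top_of_set (X i)) {..<n})"
    by (simp add: Hausdorff_space_product_topology Hausdorff_space_subtopology)
  show "first_countable (product_topology (\<lambda>i. top_of_set (X i)) {..<n})"
    by (simp add: first_countable_finite_product)
  show "continuous_map (product_topology (\<lambda>i. top_of_set (X i)) {..<n})
      (product_topology (\<lambda>i. top_of_set (X i)) {..<n}) (prod_map n f)"
    using assms(2,3) by (rule continuous_map_prod_map)
  show "y \<in> topspace (product_topology (\<lambda>i. top_of_set (X i)) {..<n})"
    using assms(4) by simp
qed (fact assms(5), rule connected_component_of_omega_limit_prod_map[OF assms(1,5)])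

end
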